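(* Let $V$ be a nonzero finite-dimensional complex vector space with a norm $\lVert\cdot\rVert$. Let $x,y\in\mathrm U(V)$ be such that the subgroup of $\mathrm{GL}(V)$ generated by $x$ and $y$ is finite, and suppose $\lVert \mathrm{id}_V-x\rVert_{\mathrm{op}}<1/2$ and $\lVert \mathrm{id}_V-y\rVert_{\mathrm{op}}<1/2$. Then $xy=yx$.
   Context: $\mathrm U(V)$ denotes the group of linear isometries of $V$, i.e. the set of $x\in\mathrm{GL}(V)$ with $\lVert xv\rVert=\lVert v\rVert$ for all $v\in V$. For $a\in\mathrm{End}(V)$, the operator norm is $\lVert a\rVert_{\mathrm{op}}=\max\{\lVert av\rVert : v\in V,\ \lVert v\rVert=1\}$. *)

theory Defs
  imports "HOL-Analysis.Analysis"
begin

text \<open>V is modelled as complex^'n (any finite index type; nonzero since types are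
nonempty), equipped with an arbitrary norm N. Endomorphisms are n x n complex matrices.\<close>

definition is_norm :: "(complex ^ 'n \<Rightarrow> real) \<Rightarrow> bool" where
  "is_norm N \<longleftrightarrow>
     (\<forall>v. 0 \<le> N v) \<and> (\<forall>v. N v = 0 \<longleftrightarrow> v = 0) \<and>
     (\<forall>c v. N (c *s v) = cmod c * N v) \<and>
     (\<forall>v w. N (v + w) \<le> N v + N w)"

definition unitary_group :: "(complex ^ 'n \<Rightarrow> real) \<Rightarrow> (complex ^ 'n ^ 'n) set" where
  "unitary_group N = {x. invertible x \<and> (\<forall>v. N (x *v v) = N v)}"

definition op_norm :: "(complex ^ 'n \<Rightarrow> real) \<Rightarrow> complex ^ 'n ^ 'n \<Rightarrow> real" where
  "op_norm N a = Sup ((\<lambda>v. N (a *v v)) ` {v. N v = 1})"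

inductive_set gen_subgroup :: "complex ^ 'n ^ 'n \<Rightarrow> complex ^ 'n ^ 'n \<Rightarrow> (complex ^ 'n ^ 'n) set"
  for x y where
  one: "mat 1 \<in> gen_subgroup x y"
| mx: "g \<in> gen_subgroup x y \<Longrightarrow> x ** g \<in> gen_subgroup x y"
| my: "g \<in> gen_subgroup x y \<Longrightarrow> y ** g \<in> gen_subgroup x y"
| mxi: "g \<in> gen_subgroup x y \<Longrightarrow> matrix_inv x ** g \<in> gen_subgroup x y"
| myi: "g \<in> gen_subgroup x y \<Longrightarrow> matrix_inv y ** g \<in> gen_subgroup x y"

end

theory Submission
  imports Defs
begin

(* For isometries g, h the identities
     1 - [g,h] = ((1 - h)(1 - g) - (1 - g)(1 - h)) g^-1 h^-1   and   1 - [g,h] = (g (1 - h) g^-1 - (1 - h)) h^-1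
   give |1 - [g,h]| <= 2 |1 - g| |1 - h| and |1 - [g,h]| <= 2 |1 - h| in operator norm.
   By the first, the iterated commutators z_0 = y, z_(k+1) = [x, z_k] satisfy
   |1 - z_k| <= |1 - y| (2 |1 - x|)^k --> 0; as they range over a finite group, some z_k = 1.
   Going back down: if x commutes with c = [x, z] and |1 - z| < 1/2, then c^n = [x^n, z], so by the
   second bound every power of c lies within distance 2 |1 - z| < 1 of the identity; averaging over
   the finite cyclic group generated by c then forces c = 1. So x commutes with every z_k, and
   in particular with y. *)

lemma matrix_inv_right:
  fixes A :: "'a::field^'n^'n"
  assumes "invertible A"
  shows "A ** matrix_inv A = mat 1"
  using someI_ex[of "\<lambda>A'. A ** A' = mat 1 \<and> A' ** A = mat 1"] assms
  unfolding invertible_def matrix_inv_def by blast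

lemma matrix_inv_left:
  fixes A :: "'a::field^'n^'n"
  assumes "invertible A"
  shows "matrix_inv A ** A = mat 1"
  using matrix_inv_right[OF assms] matrix_left_right_inverse by blast

lemma matrix_mul_inv_cancel_right:
  fixes A B :: "'a::field^'n^'n"
  assumes "invertible B"
  shows "A ** B ** matrix_inv B = A" and "A ** matrix_inv B ** B = A"
  by (simp_all add: assms matrix_inv_left matrix_inv_right flip: matrix_mul_assoc)

lemma matrix_inv_eq:
  fixes A B :: "'a::field^'n^'n"
  assumes "A ** B = mat 1"
  shows "matrix_inv A = B"
proof -
  have "invertible A"
    using assms invertible_right_inverse by blast
  then have "matrix_inv A = matrix_inv A ** (A ** B)"
    using assms by simp
  also have "\<dots> = B"
    using matrix_inv_left[OF \<open>invertible A\<close>] by (simp add: matrix_mul_assoc)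
  finally show ?thesis .
qed

lemma invertible_mat1: "invertible (mat 1 :: 'a::semiring_1^'n^'n)"
  unfolding invertible_def by (metis matrix_mul_lid)

lemma invertible_matrix_inv:
  fixes A :: "'a::field^'n^'n"
  assumes "invertible A"
  shows "invertible (matrix_inv A)"
  using matrix_inv_left[OF assms] invertible_right_inverse by blast

lemma matrix_inv_matrix_inv:
  fixes A :: "'a::field^'n^'n"
  assumes "invertible A"
  shows "matrix_inv (matrix_inv A) = A"
  by (rule matrix_inv_eq[OF matrix_inv_left[OF assms]])

lemma matrix_inv_mult:
  fixes A B :: "'a::field^'n^'n"
  assumes "invertible A" and "invertible B"
  shows "matrix_inv (A ** B) = matrix_inv B ** matrix_inv A"
  by (rule matrix_inv_eq)
    (simp add: assms matrix_mul_assoc matrix_mul_inv_cancel_right matrix_inv_right)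

lemma matrix_mul_diff_distrib:
  fixes A B C :: "'a::ring_1^'n^'n"
  shows "A ** (B - C) = A ** B - A ** C" and "(A - B) ** C = A ** C - B ** C"
  by (simp_all add: matrix_eq matrix_vector_mult_diff_distrib matrix_vector_mult_diff_rdistrib
      flip: matrix_vector_mul_assoc)

primrec matrix_pow :: "'a::semiring_1^'n^'n \<Rightarrow> nat \<Rightarrow> 'a^'n^'n" where
  "matrix_pow A 0 = mat 1"
| "matrix_pow A (Suc k) = A ** matrix_pow A k"

lemma matrix_pow_Suc_right: "matrix_pow A (Suc k) = matrix_pow A k ** A"
  by (induction k) (simp_all add: matrix_mul_assoc)

lemma matrix_pow_add: "matrix_pow A (i + j) = matrix_pow A i ** matrix_pow A j"
  by (induction i) (simp_all add: matrix_mul_assoc)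

lemma matrix_pow_commute:
  assumes "A ** B = B ** A"
  shows "A ** matrix_pow B k = matrix_pow B k ** A"
proof (induction k)
  case (Suc k)
  have "A ** matrix_pow B (Suc k) = A ** B ** matrix_pow B k"
    by (simp add: matrix_mul_assoc)
  also have "\<dots> = B ** (A ** matrix_pow B k)"
    by (simp add: assms matrix_mul_assoc)
  finally show ?case
    by (simp add: Suc.IH matrix_mul_assoc)
qed simp

lemma invertible_matrix_pow:
  fixes A :: "'a::field^'n^'n"
  assumes "invertible A"
  shows "invertible (matrix_pow A k)"
  by (induction k) (simp_all add: assms invertible_mult invertible_mat1)

definition commutator :: "'a::field^'n^'n \<Rightarrow> 'a^'n^'n \<Rightarrow> 'a^'n^'n" where
  "commutator A B = A ** B ** matrix_inv A ** matrix_inv B"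

lemma commute_if_commutator_eq_mat1:
  fixes A B :: "'a::field^'n^'n"
  assumes "invertible A" "invertible B" and "commutator A B = mat 1"
  shows "A ** B = B ** A"
proof -
  have "A ** B = commutator A B ** (B ** A)"
    by (simp add: commutator_def assms(1,2) matrix_mul_assoc matrix_mul_inv_cancel_right)
  then show ?thesis
    using assms(3) by simp
qed

lemma matrix_pow_commutator:
  fixes A B :: "'a::field^'n^'n"
  assumes "invertible A" "invertible B" and "A ** commutator A B = commutator A B ** A"
  shows "matrix_pow (commutator A B) k = commutator (matrix_pow A k) B"
proof (induction k)
  case 0
  then show ?case
    by (simp add: commutator_def assms(2) matrix_inv_eq matrix_inv_right)
next
  case (Suc k)
  let ?C = "commutator A B" and ?Ak = "matrix_pow A k"
  have "matrix_pow ?C (Suc k) = ?C ** commutator ?Ak B"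
    by (simp add: Suc.IH)
  also have "\<dots> = ?C ** ?Ak ** B ** matrix_inv ?Ak ** matrix_inv B"
    by (simp add: commutator_def matrix_mul_assoc)
  also have "\<dots> = ?Ak ** ?C ** B ** matrix_inv ?Ak ** matrix_inv B"
    using matrix_pow_commute[OF assms(3)[symmetric], of k] by simp
  also have "\<dots> = ?Ak ** A ** B ** (matrix_inv A ** matrix_inv ?Ak) ** matrix_inv B"
    by (simp add: commutator_def assms(2) matrix_mul_assoc matrix_mul_inv_cancel_right)
  also have "\<dots> = commutator (matrix_pow A (Suc k)) B"
    by (simp only: matrix_pow_Suc_right)
      (simp add: commutator_def matrix_inv_mult assms(1) invertible_matrix_pow matrix_mul_assoc)
  finally show ?case .
qed

lemma mat1_minus_commutator:
  fixes A B :: "'a::field^'n^'n"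
  assumes "invertible A" "invertible B"
  shows "mat 1 - commutator A B
           = ((mat 1 - B) ** (mat 1 - A) - (mat 1 - A) ** (mat 1 - B)) ** (matrix_inv A ** matrix_inv B)"
    and "mat 1 - commutator A B = (A ** (mat 1 - B) ** matrix_inv A - (mat 1 - B)) ** matrix_inv B"
  by (simp_all add: commutator_def matrix_mul_diff_distrib matrix_mul_assoc assms
      matrix_mul_inv_cancel_right matrix_inv_right)

lemma mat1_in_unitary_group: "mat 1 \<in> unitary_group N"
  by (simp add: unitary_group_def invertible_mat1)

lemma unitary_group_mult:
  assumes "A \<in> unitary_group N" "B \<in> unitary_group N"
  shows "A ** B \<in> unitary_group N"
  using assms by (simp add: unitary_group_def invertible_mult flip: matrix_vector_mul_assoc)

lemma unitary_group_matrix_inv: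
  assumes "A \<in> unitary_group N"
  shows "matrix_inv A \<in> unitary_group N"
proof -
  have "N (matrix_inv A *v v) = N v" for v
  proof -
    have "N (matrix_inv A *v v) = N (A *v (matrix_inv A *v v))"
      using assms by (simp add: unitary_group_def)
    also have "\<dots> = N v"
      using assms by (simp add: unitary_group_def matrix_vector_mul_assoc matrix_inv_right)
    finally show ?thesis .
  qed
  then show ?thesis
    using assms by (simp add: unitary_group_def invertible_matrix_inv)
qed

lemma unitary_group_matrix_pow:
  assumes "A \<in> unitary_group N"
  shows "matrix_pow A k \<in> unitary_group N"
  by (induction k) (simp_all add: assms mat1_in_unitary_group unitary_group_mult)

definition bounded_by :: "(complex^'n \<Rightarrow> real) \<Rightarrow> real \<Rightarrow> complex^'n^'n \<Rightarrow> bool" where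
  "bounded_by N r A \<longleftrightarrow> (\<forall>v. N (A *v v) \<le> r * N v)"

locale vector_norm =
  fixes N :: "complex^'n \<Rightarrow> real"
  assumes is_norm: "is_norm N"
begin

lemma N_nonneg: "0 \<le> N v"
  using is_norm unfolding is_norm_def by blast

lemma N_eq_0_iff: "N v = 0 \<longleftrightarrow> v = 0"
  using is_norm unfolding is_norm_def by blast

lemma N_zero [simp]: "N 0 = 0"
  by (simp add: N_eq_0_iff)

lemma N_pos: "v \<noteq> 0 \<Longrightarrow> 0 < N v"
  using N_nonneg[of v] N_eq_0_iff[of v] by linarith

lemma N_scale: "N (c *s v) = cmod c * N v"
  using is_norm unfolding is_norm_def by blast

lemma N_triangle: "N (v + w) \<le> N v + N w"
  using is_norm unfolding is_norm_def by blast

lemma N_scaleR: "N (t *\<^sub>R v) = \<bar>t\<bar> * N v"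
proof -
  have "t *\<^sub>R v = complex_of_real t *s v"
    by (simp add: vec_eq_iff scaleR_conv_of_real[where 'a=complex])
  then show ?thesis
    by (simp add: N_scale)
qed

lemma N_diff_le: "N (v - w) \<le> N v + N w"
  using N_triangle[of v "-w"] N_scaleR[of "-1" w] by simp

lemma N_sum_le: "finite A \<Longrightarrow> N (sum f A) \<le> (\<Sum>i\<in>A. N (f i))"
  by (induction A rule: finite_induct) (auto intro: order_trans[OF N_triangle])

lemma bounded_by_nonneg:
  assumes "bounded_by N r A"
  shows "0 \<le> r"
proof -
  let ?v = "axis undefined 1 :: complex^'n"
  have "0 < N ?v"
    by (simp add: N_pos)
  moreover have "0 \<le> r * N ?v"
    using assms N_nonneg[of "A *v ?v"] unfolding bounded_by_def by (meson order_trans)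
  ultimately show ?thesis
    by (simp add: zero_le_mult_iff)
qed

lemma bounded_by_mono: "bounded_by N r A \<Longrightarrow> r \<le> s \<Longrightarrow> bounded_by N s A"
  unfolding bounded_by_def by (meson N_nonneg mult_right_mono order_trans)

lemma bounded_by_diff:
  assumes "bounded_by N r A" "bounded_by N s B"
  shows "bounded_by N (r + s) (A - B)"
  unfolding bounded_by_def
proof
  fix v
  have "N ((A - B) *v v) \<le> N (A *v v) + N (B *v v)"
    by (simp add: matrix_vector_mult_diff_rdistrib N_diff_le)
  also have "\<dots> \<le> r * N v + s * N v"
    using assms unfolding bounded_by_def by (simp add: add_mono)
  finally show "N ((A - B) *v v) \<le> (r + s) * N v"
    by (simp add: distrib_right)
qed

lemma bounded_by_mult:
  assumes "bounded_by N r A" "bounded_by N s B"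
  shows "bounded_by N (r * s) (A ** B)"
  unfolding bounded_by_def
proof
  fix v
  have "N ((A ** B) *v v) \<le> r * N (B *v v)"
    using assms(1) by (simp add: bounded_by_def flip: matrix_vector_mul_assoc)
  also have "\<dots> \<le> r * (s * N v)"
    using assms bounded_by_nonneg unfolding bounded_by_def by (simp add: mult_left_mono)
  finally show "N ((A ** B) *v v) \<le> r * s * N v"
    by (simp add: mult.assoc)
qed

lemma unitary_group_bounded_by: "A \<in> unitary_group N \<Longrightarrow> bounded_by N 1 A"
  by (simp add: unitary_group_def bounded_by_def)

lemma bounded_by_op_norm:
  assumes "bounded_by N r A"
  shows "bounded_by N (op_norm N A) A"
  unfolding bounded_by_def
proof
  fix v
  show "N (A *v v) \<le> op_norm N A * N v"
  proof (cases "v = 0")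
    case False
    then have "0 < N v"
      by (rule N_pos)
    define u where "u = (1 / N v) *\<^sub>R v"
    have "N u = 1"
      using \<open>0 < N v\<close> by (simp add: u_def N_scaleR)
    have "bdd_above ((\<lambda>w. N (A *v w)) ` {w. N w = 1})"
      using assms by (intro bdd_aboveI[of _ r]) (auto simp: bounded_by_def, metis mult.right_neutral)
    then have "N (A *v u) \<le> op_norm N A"
      unfolding op_norm_def using \<open>N u = 1\<close> by (auto intro: cSup_upper)
    moreover have "N (A *v u) = N (A *v v) / N v"
      using \<open>0 < N v\<close> by (simp add: u_def linear_scale N_scaleR)
    ultimately show ?thesis
      using \<open>0 < N v\<close> by (simp add: field_simps)
  qed simp
qed

lemma eq_0_if_bounded_by_tendsto_0:
  assumes "\<And>k. bounded_by N (r k) A" and "r \<longlonglongrightarrow> 0"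
  shows "A = 0"
proof -
  have "N (A *v v) \<le> 0" for v
    using assms unfolding bounded_by_def
    by (intro LIMSEQ_le_const[OF tendsto_mult_left_zero[OF assms(2)]]) blast
  then have "A *v v = 0" for v
    by (meson N_eq_0_iff N_nonneg order_antisym)
  then show ?thesis
    by (simp add: matrix_eq)
qed

lemma bounded_by_commutator:
  assumes "A \<in> unitary_group N" "B \<in> unitary_group N"
    and "bounded_by N a (mat 1 - A)" "bounded_by N b (mat 1 - B)"
  shows "bounded_by N (2 * a * b) (mat 1 - commutator A B)"
proof -
  have "invertible A" "invertible B"
    using assms(1,2) by (simp_all add: unitary_group_def)
  have "bounded_by N ((b * a + a * b) * (1 * 1))
          (((mat 1 - B) ** (mat 1 - A) - (mat 1 - A) ** (mat 1 - B)) ** (matrix_inv A ** matrix_inv B))"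
    using assms by (intro bounded_by_mult bounded_by_diff unitary_group_bounded_by
        unitary_group_matrix_inv)
  then show ?thesis
    by (simp add: mat1_minus_commutator(1)[OF \<open>invertible A\<close> \<open>invertible B\<close>] algebra_simps)
qed

lemma bounded_by_commutator_right:
  assumes "A \<in> unitary_group N" "B \<in> unitary_group N" and "bounded_by N b (mat 1 - B)"
  shows "bounded_by N (2 * b) (mat 1 - commutator A B)"
proof -
  have "invertible A" "invertible B"
    using assms(1,2) by (simp_all add: unitary_group_def)
  have "bounded_by N ((1 * b * 1 + b) * 1)
          ((A ** (mat 1 - B) ** matrix_inv A - (mat 1 - B)) ** matrix_inv B)"
    using assms by (intro bounded_by_mult bounded_by_diff unitary_group_bounded_by
        unitary_group_matrix_inv)
  then show ?thesis
    by (simp add: mat1_minus_commutator(2)[OF \<open>invertible A\<close> \<open>invertible B\<close>])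
qed

lemma eq_mat1_if_finite_order_near_identity:
  assumes "0 < m" "matrix_pow C m = mat 1"
    and "r < 1" "\<And>k. bounded_by N r (mat 1 - matrix_pow C k)"
  shows "C = mat 1"
proof -
  \<comment> \<open>P / m is the averaging projection onto the fixed space of C.\<close>
  define P where "P v = (\<Sum>k<m. matrix_pow C k *v v)" for v
  have P_invariant: "C *v P v = P v" for v
  proof -
    have "C *v P v = (\<Sum>k<m. matrix_pow C (Suc k) *v v)"
      by (simp add: P_def linear_sum matrix_vector_mul_assoc)
    also have "\<dots> = P v"
      unfolding P_def using sum.lessThan_Suc_shift[of "\<lambda>k. matrix_pow C k *v v" m] assms(2)
      by (simp add: add.commute)
    finally show ?thesis .
  qed
  have P_fixed: "P w = real m *\<^sub>R w" if "C *v w = w" for w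
  proof -
    have "matrix_pow C k *v w = w" for k
      using that by (induction k) (simp_all flip: matrix_vector_mul_assoc)
    then show ?thesis
      by (simp add: P_def sum_constant_scaleR del: sum_constant)
  qed
  have P_near: "N (real m *\<^sub>R v - P v) \<le> real m * r * N v" for v
  proof -
    have "N (real m *\<^sub>R v - P v) = N (\<Sum>k<m. (mat 1 - matrix_pow C k) *v v)"
      by (simp add: P_def sum_subtractf matrix_vector_mult_diff_rdistrib sum_constant_scaleR
          del: sum_constant)
    also have "\<dots> \<le> (\<Sum>k<m. r * N v)"
      using assms(4) by (intro order_trans[OF N_sum_le] sum_mono) (auto simp: bounded_by_def)
    finally show ?thesis
      by simp
  qed
  have "P v = real m *\<^sub>R v" for v
  proof -
    define w where "w = real m *\<^sub>R v - P v"
    have "P w = real m *\<^sub>R P v - P (P v)"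
      by (simp add: w_def P_def matrix_vector_mult_diff_distrib sum_subtractf linear_scale
          scaleR_sum_right)
    then have "P w = 0"
      by (simp add: P_fixed P_invariant)
    then have "real m * N w \<le> real m * r * N w"
      using P_near[of w] by (simp add: N_scaleR)
    then have "N w \<le> r * N w"
      using assms(1) by (simp add: mult.assoc)
    then have "N w = 0"
      using assms(3) N_nonneg[of w] mult_strict_right_mono[of r 1 "N w"] by fastforce
    then show ?thesis
      by (simp add: w_def N_eq_0_iff)
  qed
  then have "C *v v = v" for v
    using P_invariant[of v] assms(1) by (simp add: linear_scale)
  then show ?thesis
    by (simp add: matrix_eq)
qed

lemma commute_if_commutes_with_commutator:
  assumes "A \<in> unitary_group N" "B \<in> unitary_group N" "bounded_by N b (mat 1 - B)" "b < 1/2"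
    and "A ** commutator A B = commutator A B ** A"
    and "0 < m" "matrix_pow (commutator A B) m = mat 1"
  shows "A ** B = B ** A"
proof -
  have "invertible A" "invertible B"
    using assms(1,2) by (simp_all add: unitary_group_def)
  have near: "bounded_by N (2 * b) (mat 1 - matrix_pow (commutator A B) k)" for k
    using bounded_by_commutator_right[OF unitary_group_matrix_pow[OF assms(1)] assms(2,3)]
    by (simp add: matrix_pow_commutator[OF \<open>invertible A\<close> \<open>invertible B\<close> assms(5)])
  have "commutator A B = mat 1"
    by (rule eq_mat1_if_finite_order_near_identity[OF assms(6,7) _ near]) (use assms(4) in simp)
  then show ?thesis
    by (rule commute_if_commutator_eq_mat1[OF \<open>invertible A\<close> \<open>invertible B\<close>])
qed

end

locale finite_unitary_group = vector_norm N for N :: "complex^'n \<Rightarrow> real" +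
  fixes G :: "(complex^'n^'n) set"
  assumes finite_G: "finite G"
    and G_subset_unitary: "G \<subseteq> unitary_group N"
    and mat1_mem: "mat 1 \<in> G"
    and mult_mem: "A \<in> G \<Longrightarrow> B \<in> G \<Longrightarrow> A ** B \<in> G"
    and matrix_inv_mem: "A \<in> G \<Longrightarrow> matrix_inv A \<in> G"
begin

lemma finite_order:
  assumes "A \<in> G"
  obtains m where "0 < m" "matrix_pow A m = mat 1"
proof -
  have "matrix_pow A k \<in> G" for k
    by (induction k) (simp_all add: mat1_mem mult_mem assms)
  then have "\<not> inj (matrix_pow A)"
    using finite_G by (metis finite_imageD finite_subset image_subsetI infinite_UNIV_nat)
  then obtain i j where "i < j" "matrix_pow A i = matrix_pow A j"
    unfolding inj_def by (metis linorder_neqE_nat)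
  moreover have "matrix_pow A (j - i) ** matrix_pow A i = matrix_pow A j"
    using \<open>i < j\<close> by (simp flip: matrix_pow_add)
  ultimately have "matrix_pow A (j - i) ** matrix_pow A i = matrix_pow A i"
    by simp
  moreover have "invertible (matrix_pow A i)"
    using assms G_subset_unitary by (auto simp: unitary_group_def intro: invertible_matrix_pow)
  ultimately have "matrix_pow A (j - i) = mat 1"
    by (metis matrix_mul_inv_cancel_right(1) matrix_mul_lid)
  then show ?thesis
    using \<open>i < j\<close> by (intro that[of "j - i"]) auto
qed

lemma commutator_mem: "A \<in> G \<Longrightarrow> B \<in> G \<Longrightarrow> commutator A B \<in> G"
  by (simp add: commutator_def mult_mem matrix_inv_mem)

lemma iterated_commutator_mem: "A \<in> G \<Longrightarrow> B \<in> G \<Longrightarrow> (commutator A ^^ k) B \<in> G"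
  by (induction k) (simp_all add: commutator_mem)

lemma bounded_by_iterated_commutator:
  assumes "A \<in> G" "B \<in> G" "bounded_by N a (mat 1 - A)" "bounded_by N b (mat 1 - B)"
  shows "bounded_by N (b * (2 * a) ^ k) (mat 1 - (commutator A ^^ k) B)"
proof (induction k)
  case (Suc k)
  then have "bounded_by N (2 * a * (b * (2 * a) ^ k)) (mat 1 - (commutator A ^^ Suc k) B)"
    using assms G_subset_unitary iterated_commutator_mem
    by (simp add: bounded_by_commutator subset_iff)
  then show ?case
    by (simp add: algebra_simps)
qed (simp add: assms(4))

lemma iterated_commutator_eventually_mat1:
  assumes "A \<in> G" "B \<in> G" "bounded_by N a (mat 1 - A)" "bounded_by N b (mat 1 - B)" "a < 1/2"
  obtains k where "(commutator A ^^ k) B = mat 1"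
proof -
  define Z where "Z k = (commutator A ^^ k) B" for k
  define r where "r k = b * (2 * a) ^ k" for k
  have "0 \<le> a" "0 \<le> b"
    using assms(3,4) bounded_by_nonneg by blast+
  have "range Z \<subseteq> G"
    using assms(1,2) by (auto simp: Z_def iterated_commutator_mem)
  then obtain C where "infinite (Z -` {C})"
    using inf_img_fin_domE[OF finite_subset[OF _ finite_G] infinite_UNIV_nat] by blast
  then have C_often: "\<exists>k\<ge>K. Z k = C" for K
    unfolding infinite_nat_iff_unbounded_le by auto
  have "bounded_by N (r K) (mat 1 - C)" for K
  proof -
    obtain k where "K \<le> k" "Z k = C"
      using C_often by blast
    have "r k \<le> r K"
      unfolding r_def using \<open>K \<le> k\<close> \<open>0 \<le> a\<close> \<open>0 \<le> b\<close> assms(5)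
      by (intro mult_left_mono power_decreasing) auto
    moreover have "bounded_by N (r k) (mat 1 - C)"
      using bounded_by_iterated_commutator[OF assms(1-4), of k] \<open>Z k = C\<close>
      by (simp add: Z_def r_def)
    ultimately show ?thesis
      using bounded_by_mono by blast
  qed
  moreover have "r \<longlonglongrightarrow> 0"
    unfolding r_def using \<open>0 \<le> a\<close> assms(5)
    by (intro tendsto_mult_right_zero LIMSEQ_power_zero) simp
  ultimately have "C = mat 1"
    using eq_0_if_bounded_by_tendsto_0 by fastforce
  then show ?thesis
    using C_often[of 0] that by (auto simp: Z_def)
qed

theorem commute_if_near_identity:
  assumes "A \<in> G" "B \<in> G" "bounded_by N a (mat 1 - A)" "bounded_by N b (mat 1 - B)"
    and "a < 1/2" "b < 1/2"
  shows "A ** B = B ** A"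
proof -
  obtain k where "(commutator A ^^ k) B = mat 1"
    using iterated_commutator_eventually_mat1[OF assms(1-5)] .
  have "A ** (commutator A ^^ j) B = (commutator A ^^ j) B ** A" if "j \<le> k" for j
    using that
  proof (induction j rule: inc_induct)
    case (step j)
    let ?Z = "(commutator A ^^ j) B"
    have "?Z \<in> G"
      using assms(1,2) by (rule iterated_commutator_mem)
    have "b * (2 * a) ^ j \<le> b"
      using assms(3-5) bounded_by_nonneg by (intro mult_left_le power_le_one) auto
    then have "b * (2 * a) ^ j < 1/2"
      using assms(6) by linarith
    obtain m where "0 < m" "matrix_pow (commutator A ?Z) m = mat 1"
      using finite_order[OF commutator_mem[OF assms(1) \<open>?Z \<in> G\<close>]] .
    show ?case
    proof (rule commute_if_commutes_with_commutator)
      show "A \<in> unitary_group N" "?Z \<in> unitary_group N"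
        using G_subset_unitary assms(1) \<open>?Z \<in> G\<close> by auto
      show "bounded_by N (b * (2 * a) ^ j) (mat 1 - ?Z)"
        by (rule bounded_by_iterated_commutator[OF assms(1-4)])
      show "A ** commutator A ?Z = commutator A ?Z ** A"
        using step.IH by simp
    qed fact+
  qed (simp add: \<open>(commutator A ^^ k) B = mat 1\<close>)
  from this[of 0] show ?thesis
    by simp
qed

end

lemma gen_subgroup_mult:
  "A \<in> gen_subgroup x y \<Longrightarrow> B \<in> gen_subgroup x y \<Longrightarrow> A ** B \<in> gen_subgroup x y"
  by (induction A rule: gen_subgroup.induct)
    (auto simp: matrix_mul_assoc[symmetric] intro: gen_subgroup.intros)

lemma gen_subgroup_generators:
  "x \<in> gen_subgroup x y" "y \<in> gen_subgroup x y"
  "matrix_inv x \<in> gen_subgroup x y" "matrix_inv y \<in> gen_subgroup x y"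
  by (metis gen_subgroup.intros matrix_mul_rid)+

lemma gen_subgroup_invertible:
  assumes "invertible x" "invertible y" and "A \<in> gen_subgroup x y"
  shows "invertible A"
  using assms(3)
  by (induction A rule: gen_subgroup.induct)
    (simp_all add: assms(1,2) invertible_mat1 invertible_mult invertible_matrix_inv)

lemma gen_subgroup_subset_unitary_group:
  assumes "x \<in> unitary_group N" "y \<in> unitary_group N"
  shows "gen_subgroup x y \<subseteq> unitary_group N"
proof
  show "A \<in> unitary_group N" if "A \<in> gen_subgroup x y" for A
    using that
    by (induction A rule: gen_subgroup.induct)
      (simp_all add: assms mat1_in_unitary_group unitary_group_mult unitary_group_matrix_inv)
qed

lemma gen_subgroup_matrix_inv:
  assumes "invertible x" "invertible y" and "A \<in> gen_subgroup x y"
  shows "matrix_inv A \<in> gen_subgroup x y"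
proof -
  have step: "matrix_inv (S ** g) \<in> gen_subgroup x y"
    if "S \<in> {x, y, matrix_inv x, matrix_inv y}" "g \<in> gen_subgroup x y"
      "matrix_inv g \<in> gen_subgroup x y" for S g
  proof -
    have "invertible S" "matrix_inv S \<in> gen_subgroup x y"
      using that(1) assms(1,2) gen_subgroup_generators
      by (auto simp: invertible_matrix_inv matrix_inv_matrix_inv)
    moreover have "invertible g"
      using gen_subgroup_invertible[OF assms(1,2) that(2)] .
    ultimately show ?thesis
      using that(3) by (simp add: matrix_inv_mult gen_subgroup_mult)
  qed
  show ?thesis
    using assms(3)
    by (induction A rule: gen_subgroup.induct)
      (simp_all add: step matrix_inv_eq gen_subgroup.one)
qed

theorem mainTheorem5:
  fixes N :: "complex ^ 'n \<Rightarrow> real" and x y :: "complex ^ 'n ^ 'n"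
  assumes "is_norm N"
    and "x \<in> unitary_group N" and "y \<in> unitary_group N"
    and "finite (gen_subgroup x y)"
    and "op_norm N (mat 1 - x) < 1/2" and "op_norm N (mat 1 - y) < 1/2"
  shows "x ** y = y ** x"
proof -
  have "invertible x" "invertible y"
    using assms(2,3) by (simp_all add: unitary_group_def)
  interpret finite_unitary_group N "gen_subgroup x y"
  proof
    show "is_norm N" "finite (gen_subgroup x y)"
      using assms(1,4) .
    show "gen_subgroup x y \<subseteq> unitary_group N"
      using assms(2,3) by (rule gen_subgroup_subset_unitary_group)
  qed (simp_all add: gen_subgroup.one gen_subgroup_mult
      gen_subgroup_matrix_inv[OF \<open>invertible x\<close> \<open>invertible y\<close>])
  have near: "bounded_by N (op_norm N (mat 1 - A)) (mat 1 - A)" if "A \<in> unitary_group N" for A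
    using that mat1_in_unitary_group
    by (intro bounded_by_op_norm[of "1 + 1"] bounded_by_diff unitary_group_bounded_by)
  show ?thesis
    by (rule commute_if_near_identity[OF gen_subgroup_generators(1,2) near[OF assms(2)]
          near[OF assms(3)] assms(5,6)])
qed

end
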